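(* Consider the Gaussian model: $\mu\in\mathbb{R}^d$ is unknown, $\theta_1,\ldots,\theta_m\sim\mathcal{N}(\mu,\sigma_\theta^2 I_d)$ i.i.d., and client $i$ holds $X_{i1},\ldots,X_{in}\sim\mathcal{N}(\theta_i,\sigma_x^2 I_d)$ i.i.d., with $\sigma_\theta\ge 0,\sigma_x>0$ known. Let $\overline{X}_i=\frac{1}{n}\sum_{j=1}^n X_{ij}$. Solving the maximum-likelihood problem $\widehat{\theta}_1,\ldots,\widehat{\theta}_m,\widehat{\mu}=\arg\max_{\theta_1,\ldots,\theta_m,\mu} p(\theta_1,\ldots,\theta_m,X_1,\ldots,X_m\mid\mu)$ yields the closed forms $\widehat{\mu}=\frac{1}{m}\sum_{i=1}^m\overline{X}_i$ and $\widehat{\theta}_i=a\overline{X}_i+(1-a)\widehat{\mu}$ for $i\in[m]$, where $a=\frac{\sigma_\theta^2}{\sigma_\theta^2+\sigma_x^2/n}$. This estimator $\widehat{\theta}_i=a\overline{X}_i+(1-a)\widehat{\mu}$ achieves MSE $\mathbb{E}_{\theta_i,X_1,\ldots,X_m}\|\widehat{\theta}_i-\theta_i\|^2\le\frac{d\sigma_x^2}{n}\left(\frac{1-a}{m}+a\right)$.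
   Context: Personalized estimation setting with $m$ clients, each with $n$ samples, generated by the hierarchical Gaussian model described in the claim. *)

theory Defs
  imports "HOL-Probability.Probability"
begin

definition gauss_pdf :: "real^'d \<Rightarrow> real \<Rightarrow> real^'d \<Rightarrow> real" where
  "gauss_pdf mu s x =
     (2 * pi * s\<^sup>2) powr (- real CARD('d) / 2) * exp (- (norm (x - mu))\<^sup>2 / (2 * s\<^sup>2))"

definition gaussian_vec :: "real^'d \<Rightarrow> real \<Rightarrow> (real^'d) measure" where
  "gaussian_vec mu s =
     (if s = 0 then return borel mu else density lborel (\<lambda>x. ennreal (gauss_pdf mu s x)))"

definition likelihood ::
  "nat \<Rightarrow> nat \<Rightarrow> real \<Rightarrow> real \<Rightarrow> (nat \<Rightarrow> nat \<Rightarrow> real^'d) \<Rightarrow> (nat \<Rightarrow> real^'d) \<Rightarrow> real^'d \<Rightarrow> real" where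
  "likelihood m n s_th s_x x th mu =
     (\<Prod>i<m. gauss_pdf mu s_th (th i) * (\<Prod>j<n. gauss_pdf (th i) s_x (x i j)))"

definition xbar :: "nat \<Rightarrow> (nat \<Rightarrow> nat \<Rightarrow> real^'d) \<Rightarrow> nat \<Rightarrow> real^'d" where
  "xbar n x i = (1 / real n) *\<^sub>R (\<Sum>j<n. x i j)"

definition muhat :: "nat \<Rightarrow> nat \<Rightarrow> (nat \<Rightarrow> nat \<Rightarrow> real^'d) \<Rightarrow> real^'d" where
  "muhat m n x = (1 / real m) *\<^sub>R (\<Sum>i<m. xbar n x i)"

definition shrink :: "nat \<Rightarrow> real \<Rightarrow> real \<Rightarrow> real" where
  "shrink n s_th s_x = s_th\<^sup>2 / (s_th\<^sup>2 + s_x\<^sup>2 / real n)"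

definition thetahat ::
  "nat \<Rightarrow> nat \<Rightarrow> real \<Rightarrow> real \<Rightarrow> (nat \<Rightarrow> nat \<Rightarrow> real^'d) \<Rightarrow> nat \<Rightarrow> real^'d" where
  "thetahat m n s_th s_x x i =
     shrink n s_th s_x *\<^sub>R xbar n x i + (1 - shrink n s_th s_x) *\<^sub>R muhat m n x"

end

theory Submission
  imports Defs
begin

text \<open>
  Up to a positive factor the likelihood is \<open>exp (-Q)\<close> for a quadratic form \<open>Q\<close> in
  \<open>(\<theta>, \<mu>)\<close>. The closed forms satisfy the first-order conditions of \<open>Q\<close>, so \<open>Q\<close> equals its value there
  plus a sum of squares that vanishes only at the closed forms.

  For the risk, \<open>thetahat i - \<theta>\<^sub>i\<close> is a fixed linear combination of the independent centred Gaussian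
  vectors \<open>\<theta>\<^sub>k - \<mu>\<close> and \<open>X\<^sub>k\<^sub>j - \<theta>\<^sub>k\<close>. Cross terms vanish in expectation, so the risk is \<open>d\<close> times the
  sum of squared weights times variances, and the identity \<open>\<sigma>\<^sub>\<theta>\<^sup>2 (1 - a) = a \<sigma>\<^sub>x\<^sup>2 / n\<close>
  collapses that sum to the stated bound, which therefore holds with equality.
\<close>

lemma gauss_pdf_nonneg: "0 \<le> gauss_pdf mu s x"
  unfolding gauss_pdf_def by simp

lemma borel_measurable_gauss_pdf: "gauss_pdf mu s \<in> borel_measurable lborel"
  unfolding gauss_pdf_def[abs_def] by measurable

lemma gauss_pdf_eq_prod_normal_density:
  fixes mu x :: "real^'d"
  assumes s: "s > 0"
  shows "gauss_pdf mu s x = (\<Prod>b\<in>Basis. normal_density (mu \<bullet> b) s (x \<bullet> b))"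
proof -
  let ?y = "2 * pi * s\<^sup>2"
  have y: "?y > 0" using s by simp
  have const: "(1 / sqrt ?y) ^ CARD('d) = ?y powr (- real CARD('d) / 2)"
  proof -
    have "1 / sqrt ?y = ?y powr (-1/2)"
      using y by (simp add: powr_minus_divide powr_half_sqrt)
    then have "(1 / sqrt ?y) ^ CARD('d) = (?y powr (-1/2)) powr real CARD('d)"
      using y by (subst powr_realpow) auto
    then show ?thesis by (simp add: powr_powr)
  qed
  have norm_sq: "(norm (x - mu))\<^sup>2 = (\<Sum>b\<in>Basis. (x \<bullet> b - mu \<bullet> b)\<^sup>2)"
    unfolding power2_norm_eq_inner
    by (subst euclidean_inner) (simp add: inner_diff_left power2_eq_square)
  have "(\<Prod>b\<in>Basis. normal_density (mu \<bullet> b) s (x \<bullet> b))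
      = (\<Prod>b\<in>(Basis::(real^'d) set). 1 / sqrt ?y)
        * exp (\<Sum>b\<in>(Basis::(real^'d) set). -(x \<bullet> b - mu \<bullet> b)\<^sup>2 / (2 * s\<^sup>2))"
    by (simp only: normal_density_def prod.distrib exp_sum[symmetric] finite_Basis)
  also have "(\<Prod>b\<in>(Basis::(real^'d) set). 1 / sqrt ?y) = ?y powr (- real CARD('d) / 2)"
    by (simp add: const)
  also have "(\<Sum>b\<in>(Basis::(real^'d) set). -(x \<bullet> b - mu \<bullet> b)\<^sup>2 / (2 * s\<^sup>2))
      = - (norm (x - mu))\<^sup>2 / (2 * s\<^sup>2)"
    unfolding norm_sq by (simp add: sum_divide_distrib[symmetric] sum_negf)
  finally show ?thesis
    unfolding gauss_pdf_def by simp
qed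

lemma
  fixes h :: "'a::euclidean_space \<Rightarrow> real \<Rightarrow> real"
  assumes int: "\<And>b. b \<in> Basis \<Longrightarrow> integrable lborel (h b)"
  shows integrable_lborel_prod_Basis: "integrable lborel (\<lambda>x::'a. \<Prod>b\<in>Basis. h b (x \<bullet> b))"
    and integral_lborel_prod_Basis:
      "(\<integral>x. (\<Prod>b\<in>Basis. h b (x \<bullet> b)) \<partial>(lborel::'a measure)) = (\<Prod>b\<in>Basis. integral\<^sup>L lborel (h b))"
proof -
  interpret product_sigma_finite "\<lambda>_::'a. lborel :: real measure"
    by (simp add: product_sigma_finite_def lborel.sigma_finite_measure_axioms)
  have coords: "(\<lambda>f. \<Sum>b\<in>Basis. f b *\<^sub>R b) \<in> measurable (\<Pi>\<^sub>M b\<in>(Basis::'a set). lborel) borel"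
    by measurable
  have prod_coords: "(\<Prod>b\<in>Basis. h b ((\<Sum>b'\<in>Basis. f b' *\<^sub>R b') \<bullet> b)) = (\<Prod>b\<in>(Basis::'a set). h b (f b))" for f
    by (intro prod.cong refl) (simp add: inner_sum_left inner_Basis if_distrib sum.delta cong: if_cong)
  have "h b \<in> borel_measurable borel" if "b \<in> Basis" for b
    using int[OF that] by auto
  then have meas: "(\<lambda>x::'a. \<Prod>b\<in>Basis. h b (x \<bullet> b)) \<in> borel_measurable borel"
    by (intro borel_measurable_prod) (auto intro: measurable_compose[OF borel_measurable_inner])
  have "integrable (\<Pi>\<^sub>M b\<in>Basis. lborel) (\<lambda>f. \<Prod>b\<in>(Basis::'a set). h b (f b))"
    by (rule product_integrable_prod) (auto intro: int)
  then show "integrable lborel (\<lambda>x::'a. \<Prod>b\<in>Basis. h b (x \<bullet> b))"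
    by (subst lborel_eq, subst integrable_distr_eq[OF coords meas]) (simp only: prod_coords)
  have "(\<integral>f. (\<Prod>b\<in>Basis. h b (f b)) \<partial>(\<Pi>\<^sub>M b\<in>(Basis::'a set). lborel)) = (\<Prod>b\<in>Basis. integral\<^sup>L lborel (h b))"
    by (rule product_integral_prod) (auto intro: int)
  then show "(\<integral>x. (\<Prod>b\<in>Basis. h b (x \<bullet> b)) \<partial>(lborel::'a measure)) = (\<Prod>b\<in>Basis. integral\<^sup>L lborel (h b))"
    by (subst lborel_eq, subst integral_distr[OF coords meas]) (simp only: prod_coords)
qed

lemma
  fixes mu :: "real^'d" and q :: 'd
  assumes s: "s > 0"
  shows integrable_gauss_pdf_component_power:
      "integrable lborel (\<lambda>x. gauss_pdf mu s x * (x$q - mu$q)^k)"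
    and integral_gauss_pdf_component_power:
      "(\<integral>x. gauss_pdf mu s x * (x$q - mu$q)^k \<partial>lborel)
         = (\<integral>t. normal_density (mu$q) s t * (t - mu$q)^k \<partial>lborel)"
proof -
  define e :: "real^'d" where "e = axis q 1"
  have e: "e \<in> Basis"
    unfolding e_def by (simp add: axis_in_Basis_iff)
  define h where "h b t = normal_density (mu \<bullet> b) s t * (if b = e then (t - mu \<bullet> b)^k else 1)"
    for b :: "real^'d" and t
  have int: "integrable lborel (h b)" if "b \<in> Basis" for b
    unfolding h_def using integrable_normal_moment[OF s, of "mu \<bullet> b" k] integrable_normal_density[OF s, of "mu \<bullet> b"]
    by (cases "b = e") auto
  have prod_h: "(\<Prod>b\<in>Basis. h b (x \<bullet> b)) = gauss_pdf mu s x * (x$q - mu$q)^k" for x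
  proof -
    have "(\<Prod>b\<in>Basis. h b (x \<bullet> b)) = (\<Prod>b\<in>Basis. normal_density (mu \<bullet> b) s (x \<bullet> b)) *
        (\<Prod>b\<in>(Basis::(real^'d) set). if b = e then (x \<bullet> b - mu \<bullet> b)^k else 1)"
      unfolding h_def by (simp only: prod.distrib)
    also have "(\<Prod>b\<in>(Basis::(real^'d) set). if b = e then (x \<bullet> b - mu \<bullet> b)^k else 1) = (x \<bullet> e - mu \<bullet> e)^k"
      using e by (simp add: prod.delta)
    finally show ?thesis
      by (simp add: gauss_pdf_eq_prod_normal_density[OF s] e_def cart_eq_inner_axis)
  qed
  show "integrable lborel (\<lambda>x. gauss_pdf mu s x * (x$q - mu$q)^k)"
    using integrable_lborel_prod_Basis[of h, OF int] unfolding prod_h .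
  have "(\<integral>x. gauss_pdf mu s x * (x$q - mu$q)^k \<partial>lborel) = (\<Prod>b\<in>Basis. integral\<^sup>L lborel (h b))"
    using integral_lborel_prod_Basis[of h, OF int] unfolding prod_h .
  also have "\<dots> = (\<Prod>b\<in>(Basis::(real^'d) set).
      if b = e then (\<integral>t. normal_density (mu$q) s t * (t - mu$q)^k \<partial>lborel) else 1)"
    by (intro prod.cong refl) (auto simp: h_def[abs_def] e_def cart_eq_inner_axis integral_normal_density[OF s])
  also have "\<dots> = (\<integral>t. normal_density (mu$q) s t * (t - mu$q)^k \<partial>lborel)"
    using e by (simp add: prod.delta)
  finally show "(\<integral>x. gauss_pdf mu s x * (x$q - mu$q)^k \<partial>lborel)
      = (\<integral>t. normal_density (mu$q) s t * (t - mu$q)^k \<partial>lborel)" .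
qed

lemma
  fixes c :: "real^'d" and q :: 'd
  assumes "s \<ge> 0"
  shows integrable_gaussian_vec_component_power: "integrable (gaussian_vec c s) (\<lambda>v. (v$q - c$q)^k)"
    and integral_gaussian_vec_component: "(\<integral>v. v$q - c$q \<partial>gaussian_vec c s) = 0"
    and integral_gaussian_vec_component_square: "(\<integral>v. (v$q - c$q)\<^sup>2 \<partial>gaussian_vec c s) = s\<^sup>2"
proof -
  have moment: "integrable (gaussian_vec c s) (\<lambda>v. (v$q - c$q)^k) \<and>
      (\<integral>v. (v$q - c$q)^k \<partial>gaussian_vec c s)
        = (if s = 0 then 0^k else \<integral>t. normal_density (c$q) s t * (t - c$q)^k \<partial>lborel)" for k
  proof (cases "s = 0")
    case True
    have "(\<lambda>v::real^'d. (v$q - c$q)^k) \<in> borel_measurable borel"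
      by measurable
    then show ?thesis
      using True by (simp add: gaussian_vec_def integrable_iff_bounded nn_integral_return integral_return)
  next
    case False
    then have s: "s > 0"
      using assms by simp
    have meas: "(\<lambda>v::real^'d. (v$q - c$q)^k) \<in> borel_measurable lborel"
      by measurable
    show ?thesis
      using False integrable_gauss_pdf_component_power[OF s, of c q k] integral_gauss_pdf_component_power[OF s, of c q k]
      by (simp add: gaussian_vec_def gauss_pdf_nonneg
          integrable_density[OF meas borel_measurable_gauss_pdf] integral_density[OF meas borel_measurable_gauss_pdf])
  qed
  then show "integrable (gaussian_vec c s) (\<lambda>v. (v$q - c$q)^k)"
    by blast
  show "(\<integral>v. v$q - c$q \<partial>gaussian_vec c s) = 0"
    using moment[of 1] integral_normal_moment_odd[of s "c$q" 0] assms by (cases "s = 0") auto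
  show "(\<integral>v. (v$q - c$q)\<^sup>2 \<partial>gaussian_vec c s) = s\<^sup>2"
    using moment[of 2] integral_normal_moment_even[of s "c$q" 1] assms by (cases "s = 0") auto
qed

lemma
  fixes V :: "'a \<Rightarrow> real^'d" and c :: "real^'d" and q :: 'd
  assumes V: "V \<in> borel_measurable M" and law: "distr M borel V = gaussian_vec c s" and "s \<ge> 0"
  shows integral_gaussian_component: "(\<integral>\<omega>. (V \<omega> - c)$q \<partial>M) = 0"
    and integrable_gaussian_component_square: "integrable M (\<lambda>\<omega>. ((V \<omega> - c)$q)\<^sup>2)"
    and integral_gaussian_component_square: "(\<integral>\<omega>. ((V \<omega> - c)$q)\<^sup>2 \<partial>M) = s\<^sup>2"
proof -
  have meas: "(\<lambda>v::real^'d. (v$q - c$q)^k) \<in> borel_measurable borel" for k :: nat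
    by measurable
  have "integrable M (\<lambda>\<omega>. (V \<omega> $ q - c$q)^k)" for k
    using integrable_gaussian_vec_component_power[OF \<open>s \<ge> 0\<close>, of c q k]
    by (simp add: law[symmetric] integrable_distr_eq[OF V meas])
  from this[of 2] show "integrable M (\<lambda>\<omega>. ((V \<omega> - c)$q)\<^sup>2)"
    by simp
  show "(\<integral>\<omega>. (V \<omega> - c)$q \<partial>M) = 0"
    using integral_gaussian_vec_component[OF \<open>s \<ge> 0\<close>, of c q] meas[of 1]
    by (simp add: law[symmetric] integral_distr[OF V])
  show "(\<integral>\<omega>. ((V \<omega> - c)$q)\<^sup>2 \<partial>M) = s\<^sup>2"
    using integral_gaussian_vec_component_square[OF \<open>s \<ge> 0\<close>, of c q] meas[of 2]
    by (simp add: law[symmetric] integral_distr[OF V])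
qed

lemma (in prob_space)
  fixes U :: "'i \<Rightarrow> 'a \<Rightarrow> real"
  assumes J: "finite J" and indep: "indep_vars (\<lambda>_. borel) U J"
    and centred: "\<And>k. k \<in> J \<Longrightarrow> (\<integral>\<omega>. U k \<omega> \<partial>M) = 0"
    and square_int: "\<And>k. k \<in> J \<Longrightarrow> integrable M (\<lambda>\<omega>. (U k \<omega>)\<^sup>2)"
  shows integrable_square_sum_indep: "integrable M (\<lambda>\<omega>. (\<Sum>k\<in>J. w k * U k \<omega>)\<^sup>2)"
    and integral_square_sum_indep_centred:
      "(\<integral>\<omega>. (\<Sum>k\<in>J. w k * U k \<omega>)\<^sup>2 \<partial>M) = (\<Sum>k\<in>J. (w k)\<^sup>2 * (\<integral>\<omega>. (U k \<omega>)\<^sup>2 \<partial>M))"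
proof -
  have int: "integrable M (U k)" if "k \<in> J" for k
    using indep that square_int[OF that]
    by (auto simp: indep_vars_def intro: square_integrable_imp_integrable)
  have expand: "(\<Sum>k\<in>J. w k * U k \<omega>)\<^sup>2 = (\<Sum>k\<in>J. \<Sum>l\<in>J. w k * w l * (U k \<omega> * U l \<omega>))" for \<omega>
    by (simp add: power2_eq_square sum_product ac_simps)
  have cross: "integrable M (\<lambda>\<omega>. U k \<omega> * U l \<omega>) \<and>
      (\<integral>\<omega>. U k \<omega> * U l \<omega> \<partial>M) = (if k = l then \<integral>\<omega>. (U k \<omega>)\<^sup>2 \<partial>M else 0)"
    if "k \<in> J" "l \<in> J" for k l
  proof (cases "k = l")
    case True
    then show ?thesis
      using square_int[OF \<open>k \<in> J\<close>] by (simp add: power2_eq_square)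
  next
    case False
    have indep_kl: "indep_vars (\<lambda>_. borel) U {k, l}"
      by (rule indep_vars_subset[OF indep]) (use that in auto)
    have "integrable M (\<lambda>\<omega>. \<Prod>i\<in>{k, l}. U i \<omega>)"
      by (rule indep_vars_integrable[OF _ indep_kl]) (use int that in auto)
    moreover have "(\<integral>\<omega>. (\<Prod>i\<in>{k, l}. U i \<omega>) \<partial>M) = (\<Prod>i\<in>{k, l}. \<integral>\<omega>. U i \<omega> \<partial>M)"
      by (rule indep_vars_lebesgue_integral[OF _ indep_kl]) (use int that in auto)
    ultimately show ?thesis
      using False centred[OF \<open>k \<in> J\<close>] by simp
  qed
  show "integrable M (\<lambda>\<omega>. (\<Sum>k\<in>J. w k * U k \<omega>)\<^sup>2)"
    unfolding expand using cross by (auto intro!: Bochner_Integration.integrable_sum)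
  have "(\<integral>\<omega>. (\<Sum>k\<in>J. w k * U k \<omega>)\<^sup>2 \<partial>M)
      = (\<Sum>k\<in>J. \<Sum>l\<in>J. w k * w l * (\<integral>\<omega>. U k \<omega> * U l \<omega> \<partial>M))"
    unfolding expand using cross
    by (simp add: Bochner_Integration.integral_sum Bochner_Integration.integrable_sum)
  also have "\<dots> = (\<Sum>k\<in>J. \<Sum>l\<in>J. if k = l then w k * w l * (\<integral>\<omega>. (U k \<omega>)\<^sup>2 \<partial>M) else 0)"
    using cross by (intro sum.cong refl) auto
  also have "\<dots> = (\<Sum>k\<in>J. (w k)\<^sup>2 * (\<integral>\<omega>. (U k \<omega>)\<^sup>2 \<partial>M))"
    using J by (simp add: sum.delta power2_eq_square)
  finally show "(\<integral>\<omega>. (\<Sum>k\<in>J. w k * U k \<omega>)\<^sup>2 \<partial>M) = (\<Sum>k\<in>J. (w k)\<^sup>2 * (\<integral>\<omega>. (U k \<omega>)\<^sup>2 \<partial>M))" .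
qed

lemma (in prob_space)
  fixes V :: "'i \<Rightarrow> 'a \<Rightarrow> real^'d"
  assumes J: "finite J" and indep: "indep_vars (\<lambda>_. borel) V J"
    and law: "\<And>k. k \<in> J \<Longrightarrow> distr M borel (V k) = gaussian_vec (c k) (s k)"
    and s: "\<And>k. k \<in> J \<Longrightarrow> s k \<ge> 0"
  shows integrable_norm_sq_sum_indep_gaussian:
      "integrable M (\<lambda>\<omega>. (norm (\<Sum>k\<in>J. w k *\<^sub>R (V k \<omega> - c k)))\<^sup>2)"
    and integral_norm_sq_sum_indep_gaussian:
      "(\<integral>\<omega>. (norm (\<Sum>k\<in>J. w k *\<^sub>R (V k \<omega> - c k)))\<^sup>2 \<partial>M)
         = real CARD('d) * (\<Sum>k\<in>J. (w k)\<^sup>2 * (s k)\<^sup>2)"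
proof -
  define U where "U q k \<omega> = (V k \<omega> - c k) $ q" for q k \<omega>
  have V: "V k \<in> borel_measurable M" if "k \<in> J" for k
    using indep that by (auto simp: indep_vars_def)
  have indep_U: "indep_vars (\<lambda>_. borel) (U q) J" for q
    unfolding U_def by (rule indep_vars_compose2[OF indep]) simp
  have coords: "(norm (\<Sum>k\<in>J. w k *\<^sub>R (V k \<omega> - c k)))\<^sup>2 = (\<Sum>q\<in>UNIV. (\<Sum>k\<in>J. w k * U q k \<omega>)\<^sup>2)" for \<omega>
    unfolding power2_norm_eq_inner inner_vec_def by (simp add: sum_component U_def power2_eq_square)
  have coord: "integrable M (\<lambda>\<omega>. (\<Sum>k\<in>J. w k * U q k \<omega>)\<^sup>2) \<and>
      (\<integral>\<omega>. (\<Sum>k\<in>J. w k * U q k \<omega>)\<^sup>2 \<partial>M) = (\<Sum>k\<in>J. (w k)\<^sup>2 * (s k)\<^sup>2)" for q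
    using integrable_square_sum_indep[OF J indep_U] integral_square_sum_indep_centred[OF J indep_U]
      integral_gaussian_component[OF V law s] integrable_gaussian_component_square[OF V law s]
      integral_gaussian_component_square[OF V law s]
    by (simp add: U_def)
  show "integrable M (\<lambda>\<omega>. (norm (\<Sum>k\<in>J. w k *\<^sub>R (V k \<omega> - c k)))\<^sup>2)"
    unfolding coords using coord by auto
  show "(\<integral>\<omega>. (norm (\<Sum>k\<in>J. w k *\<^sub>R (V k \<omega> - c k)))\<^sup>2 \<partial>M) = real CARD('d) * (\<Sum>k\<in>J. (w k)\<^sup>2 * (s k)\<^sup>2)"
    unfolding coords using coord by (simp add: Bochner_Integration.integral_sum)
qed

definition likelihood_exponent ::
  "nat \<Rightarrow> nat \<Rightarrow> real \<Rightarrow> real \<Rightarrow> (nat \<Rightarrow> nat \<Rightarrow> real^'d) \<Rightarrow> (nat \<Rightarrow> real^'d) \<Rightarrow> real^'d \<Rightarrow> real" where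
  "likelihood_exponent m n s_th s_x x th nu =
     (\<Sum>i<m. (norm (th i - nu))\<^sup>2 / (2 * s_th\<^sup>2) + (\<Sum>j<n. (norm (x i j - th i))\<^sup>2 / (2 * s_x\<^sup>2)))"

lemma likelihood_eq_exp_exponent:
  "likelihood m n s_th s_x x th nu =
    ((2 * pi * s_th\<^sup>2) powr (- real CARD('d) / 2) * ((2 * pi * s_x\<^sup>2) powr (- real CARD('d) / 2)) ^ n) ^ m
    * exp (- likelihood_exponent m n s_th s_x x th nu)"
  for x :: "nat \<Rightarrow> nat \<Rightarrow> real^'d"
proof -
  let ?A = "(2 * pi * s_th\<^sup>2) powr (- real CARD('d) / 2)"
  let ?B = "(2 * pi * s_x\<^sup>2) powr (- real CARD('d) / 2)"
  let ?e = "\<lambda>i. (norm (th i - nu))\<^sup>2 / (2 * s_th\<^sup>2) + (\<Sum>j<n. (norm (x i j - th i))\<^sup>2 / (2 * s_x\<^sup>2))"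
  have "likelihood m n s_th s_x x th nu = (\<Prod>i<m. (?A * exp (- (norm (th i - nu))\<^sup>2 / (2 * s_th\<^sup>2)))
      * (\<Prod>j<n. ?B * exp (- (norm (x i j - th i))\<^sup>2 / (2 * s_x\<^sup>2))))"
    unfolding likelihood_def gauss_pdf_def by (simp add: norm_minus_commute)
  also have "\<dots> = (\<Prod>i<m. (?A * ?B ^ n) * exp (- ?e i))"
    by (intro prod.cong refl)
      (simp add: prod.distrib exp_sum[symmetric] sum_negf exp_add[symmetric] exp_diff algebra_simps)
  also have "\<dots> = (?A * ?B ^ n) ^ m * exp (- likelihood_exponent m n s_th s_x x th nu)"
    by (simp add: prod.distrib likelihood_exponent_def sum_negf[symmetric] exp_sum)
  finally show ?thesis .
qed

lemma norm_add_square: "(norm (a + b))\<^sup>2 = (norm a)\<^sup>2 + 2 * (a \<bullet> b) + (norm b)\<^sup>2"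
  for a b :: "'a::real_inner"
  by (simp add: power2_norm_eq_inner inner_add_left inner_add_right inner_commute)

lemma norm_diff_square: "(norm (a - b))\<^sup>2 = (norm a)\<^sup>2 - 2 * (a \<bullet> b) + (norm b)\<^sup>2"
  for a b :: "'a::real_inner"
  by (simp add: power2_norm_eq_inner inner_diff_left inner_diff_right inner_commute)

text \<open>
  The hypothesis is the first-order condition in \<open>t\<close> at \<open>(ts, nus)\<close>; the remaining linear term
  in \<open>nu - nus\<close> cancels only after summing over all clients.
\<close>
lemma client_exponent_expansion:
  fixes t ts nu nus :: "'a::real_inner" and xs :: "nat \<Rightarrow> 'a" and ta sx :: real
  assumes "ta > 0" and "sx > 0"
    and stationary: "(1 / ta\<^sup>2) *\<^sub>R (ts - nus) = (1 / sx\<^sup>2) *\<^sub>R (\<Sum>j<n. xs j - ts)"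
  shows "(norm (t - nu))\<^sup>2 / (2 * ta\<^sup>2) + (\<Sum>j<n. (norm (xs j - t))\<^sup>2 / (2 * sx\<^sup>2))
       = (norm (ts - nus))\<^sup>2 / (2 * ta\<^sup>2) + (\<Sum>j<n. (norm (xs j - ts))\<^sup>2 / (2 * sx\<^sup>2))
         + ((norm ((t - ts) - (nu - nus)))\<^sup>2 / (2 * ta\<^sup>2) + real n * (norm (t - ts))\<^sup>2 / (2 * sx\<^sup>2))
         - ((ts - nus) \<bullet> (nu - nus)) / ta\<^sup>2"
proof -
  define A where "A = ts - nus"
  define D where "D = t - ts"
  define E where "E = nu - nus"
  have "(\<Sum>j<n. xs j - ts) \<bullet> D / sx\<^sup>2 = ((1 / sx\<^sup>2) *\<^sub>R (\<Sum>j<n. xs j - ts)) \<bullet> D"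
    by simp
  also have "\<dots> = A \<bullet> D / ta\<^sup>2"
    unfolding stationary[symmetric] A_def by simp
  finally have cross: "(\<Sum>j<n. (xs j - ts) \<bullet> D) / sx\<^sup>2 = A \<bullet> D / ta\<^sup>2"
    by (simp add: inner_sum_left)
  have shift: "xs j - t = (xs j - ts) - D" for j
    unfolding D_def by simp
  have "(\<Sum>j<n. (norm (xs j - t))\<^sup>2 / (2 * sx\<^sup>2))
      = (\<Sum>j<n. (norm (xs j - ts))\<^sup>2 / (2 * sx\<^sup>2) - (xs j - ts) \<bullet> D / sx\<^sup>2 + (norm D)\<^sup>2 / (2 * sx\<^sup>2))"
    unfolding shift using \<open>sx > 0\<close>
    by (intro sum.cong refl, subst norm_diff_square) (simp add: field_simps)
  also have "\<dots> = (\<Sum>j<n. (norm (xs j - ts))\<^sup>2 / (2 * sx\<^sup>2)) - A \<bullet> D / ta\<^sup>2 + real n * (norm D)\<^sup>2 / (2 * sx\<^sup>2)"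
    by (simp add: sum.distrib sum_subtractf sum_divide_distrib[symmetric] cross)
  finally have samples: "(\<Sum>j<n. (norm (xs j - t))\<^sup>2 / (2 * sx\<^sup>2))
      = (\<Sum>j<n. (norm (xs j - ts))\<^sup>2 / (2 * sx\<^sup>2)) - A \<bullet> D / ta\<^sup>2 + real n * (norm D)\<^sup>2 / (2 * sx\<^sup>2)" .
  have split: "t - nu = A + (D - E)"
    unfolding A_def D_def E_def by (simp add: algebra_simps)
  have prior: "(norm (t - nu))\<^sup>2 / (2 * ta\<^sup>2)
      = (norm A)\<^sup>2 / (2 * ta\<^sup>2) + A \<bullet> D / ta\<^sup>2 - A \<bullet> E / ta\<^sup>2 + (norm (D - E))\<^sup>2 / (2 * ta\<^sup>2)"
    unfolding split norm_add_square using \<open>ta > 0\<close> by (simp add: field_simps inner_diff_right)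
  show ?thesis
    unfolding samples prior by (simp add: A_def D_def E_def)
qed

lemma thetahat_stationary:
  assumes "n \<ge> 1" and "s_th > 0" and "s_x > 0"
  shows "(1 / s_th\<^sup>2) *\<^sub>R (thetahat m n s_th s_x x i - muhat m n x)
       = (1 / s_x\<^sup>2) *\<^sub>R (\<Sum>j<n. x i j - thetahat m n s_th s_x x i)"
proof -
  let ?a = "shrink n s_th s_x"
  define v where "v = xbar n x i - muhat m n x"
  have lhs: "thetahat m n s_th s_x x i - muhat m n x = ?a *\<^sub>R v"
    unfolding thetahat_def v_def by (simp add: algebra_simps)
  have "(\<Sum>j<n. x i j) = real n *\<^sub>R xbar n x i"
    unfolding xbar_def using \<open>n \<ge> 1\<close> by simp
  then have rhs: "(\<Sum>j<n. x i j - thetahat m n s_th s_x x i) = (real n * (1 - ?a)) *\<^sub>R v"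
    unfolding sum_subtractf thetahat_def v_def
    by (simp add: algebra_simps sum_constant_scaleR del: sum_constant)
  define T S where "T = s_th\<^sup>2" and "S = s_x\<^sup>2 / real n"
  have "T > 0" "S > 0" "n > 0" and s_x_sq: "s_x\<^sup>2 = real n * S"
    using assms by (simp_all add: T_def S_def)
  then have "?a = T / (T + S)" "1 - ?a = S / (T + S)"
    unfolding shrink_def T_def[symmetric] S_def[symmetric] by (simp_all add: field_simps)
  with \<open>T > 0\<close> \<open>S > 0\<close> \<open>n > 0\<close> have "?a / s_th\<^sup>2 = 1 / (T + S)" "real n * (1 - ?a) / s_x\<^sup>2 = 1 / (T + S)"
    unfolding T_def[symmetric] s_x_sq by simp_all
  then show ?thesis
    unfolding lhs rhs by simp
qed

lemma sum_thetahat_diff_muhat: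
  assumes "m \<ge> 1"
  shows "(\<Sum>i<m. thetahat m n s_th s_x x i - muhat m n x) = 0"
proof -
  have "(\<Sum>i<m. xbar n x i) = real m *\<^sub>R muhat m n x"
    unfolding muhat_def using assms by simp
  then show ?thesis
    unfolding thetahat_def
    by (simp add: algebra_simps sum.distrib sum_subtractf scaleR_sum_right[symmetric] sum_constant_scaleR
        del: sum_constant)
qed

definition exponent_excess ::
  "nat \<Rightarrow> nat \<Rightarrow> real \<Rightarrow> real \<Rightarrow> (nat \<Rightarrow> nat \<Rightarrow> real^'d) \<Rightarrow> (nat \<Rightarrow> real^'d) \<Rightarrow> real^'d \<Rightarrow> real" where
  "exponent_excess m n s_th s_x x th nu =
     (\<Sum>i<m. (norm ((th i - thetahat m n s_th s_x x i) - (nu - muhat m n x)))\<^sup>2 / (2 * s_th\<^sup>2)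
        + real n * (norm (th i - thetahat m n s_th s_x x i))\<^sup>2 / (2 * s_x\<^sup>2))"

lemma likelihood_exponent_decomp:
  assumes "m \<ge> 1" and "n \<ge> 1" and "s_th > 0" and "s_x > 0"
  shows "likelihood_exponent m n s_th s_x x th nu
       = likelihood_exponent m n s_th s_x x (thetahat m n s_th s_x x) (muhat m n x)
         + exponent_excess m n s_th s_x x th nu"
proof -
  let ?ts = "thetahat m n s_th s_x x" and ?mu = "muhat m n x"
  have "likelihood_exponent m n s_th s_x x th nu
      = (\<Sum>i<m. ((norm (?ts i - ?mu))\<^sup>2 / (2 * s_th\<^sup>2) + (\<Sum>j<n. (norm (x i j - ?ts i))\<^sup>2 / (2 * s_x\<^sup>2)))
         + ((norm ((th i - ?ts i) - (nu - ?mu)))\<^sup>2 / (2 * s_th\<^sup>2)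
            + real n * (norm (th i - ?ts i))\<^sup>2 / (2 * s_x\<^sup>2))
         - ((?ts i - ?mu) \<bullet> (nu - ?mu)) / s_th\<^sup>2)"
    unfolding likelihood_exponent_def using assms
    by (intro sum.cong refl client_exponent_expansion thetahat_stationary)
  also have "\<dots> = likelihood_exponent m n s_th s_x x ?ts ?mu + exponent_excess m n s_th s_x x th nu
      - (\<Sum>i<m. (?ts i - ?mu) \<bullet> (nu - ?mu) / s_th\<^sup>2)"
    unfolding likelihood_exponent_def exponent_excess_def by (simp only: sum.distrib sum_subtractf)
  also have "(\<Sum>i<m. (?ts i - ?mu) \<bullet> (nu - ?mu) / s_th\<^sup>2) = 0"
    unfolding sum_divide_distrib[symmetric] inner_sum_left[symmetric] sum_thetahat_diff_muhat[OF \<open>m \<ge> 1\<close>]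
    by simp
  finally show ?thesis
    by simp
qed

lemma exponent_excess_nonneg: "0 \<le> exponent_excess m n s_th s_x x th nu"
  unfolding exponent_excess_def by (intro sum_nonneg add_nonneg_nonneg) auto

lemma exponent_excess_eq_0_iff:
  assumes "m \<ge> 1" and "n \<ge> 1" and "s_th > 0" and "s_x > 0"
  shows "exponent_excess m n s_th s_x x th nu = 0
     \<longleftrightarrow> nu = muhat m n x \<and> (\<forall>i<m. th i = thetahat m n s_th s_x x i)"
proof -
  have "exponent_excess m n s_th s_x x th nu = 0 \<longleftrightarrow>
      (\<forall>i<m. th i - thetahat m n s_th s_x x i = nu - muhat m n x \<and> th i = thetahat m n s_th s_x x i)"
    unfolding exponent_excess_def using assms
    by (simp add: sum_nonneg_eq_0_iff add_nonneg_eq_0_iff Ball_def)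
  also have "\<dots> \<longleftrightarrow> nu = muhat m n x \<and> (\<forall>i<m. th i = thetahat m n s_th s_x x i)"
  proof
    assume "\<forall>i<m. th i - thetahat m n s_th s_x x i = nu - muhat m n x \<and> th i = thetahat m n s_th s_x x i"
    moreover from this have "th 0 - thetahat m n s_th s_x x 0 = nu - muhat m n x" "th 0 = thetahat m n s_th s_x x 0"
      using \<open>m \<ge> 1\<close> by auto
    ultimately show "nu = muhat m n x \<and> (\<forall>i<m. th i = thetahat m n s_th s_x x i)"
      by auto
  qed auto
  finally show ?thesis .
qed

lemma likelihood_maximal_iff:
  fixes x :: "nat \<Rightarrow> nat \<Rightarrow> real^'d"
  assumes "m \<ge> 1" and "n \<ge> 1" and "s_th > 0" and "s_x > 0"
  shows "(\<forall>th' nu'. likelihood m n s_th s_x x th' nu' \<le> likelihood m n s_th s_x x th nu)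
     \<longleftrightarrow> nu = muhat m n x \<and> (\<forall>i<m. th i = thetahat m n s_th s_x x i)"
proof -
  let ?R = "exponent_excess m n s_th s_x x"
  have "((2 * pi * s_th\<^sup>2) powr (- real CARD('d) / 2) * ((2 * pi * s_x\<^sup>2) powr (- real CARD('d) / 2)) ^ n) ^ m > 0"
    using assms by simp
  then have le_iff: "likelihood m n s_th s_x x th' nu' \<le> likelihood m n s_th s_x x th nu
      \<longleftrightarrow> ?R th nu \<le> ?R th' nu'" for th' nu'
    using likelihood_exponent_decomp[OF assms, where x = x and th = th and nu = nu]
      likelihood_exponent_decomp[OF assms, where x = x and th = th' and nu = nu']
    by (simp add: likelihood_eq_exp_exponent)
  have "?R (thetahat m n s_th s_x x) (muhat m n x) = 0"
    unfolding exponent_excess_def by simp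
  have "(\<forall>th' nu'. ?R th nu \<le> ?R th' nu') \<longleftrightarrow> ?R th nu = 0"
  proof
    assume "\<forall>th' nu'. ?R th nu \<le> ?R th' nu'"
    then have "?R th nu \<le> ?R (thetahat m n s_th s_x x) (muhat m n x)"
      by blast
    then show "?R th nu = 0"
      using \<open>?R (thetahat m n s_th s_x x) (muhat m n x) = 0\<close> exponent_excess_nonneg[of m n s_th s_x x th nu]
      by linarith
  qed (simp add: exponent_excess_nonneg)
  then show ?thesis
    unfolding le_iff exponent_excess_eq_0_iff[OF assms] .
qed

definition error_weight :: "nat \<Rightarrow> nat \<Rightarrow> real \<Rightarrow> nat \<Rightarrow> nat + nat \<times> nat \<Rightarrow> real" where
  "error_weight m n a i k = (case k of
      Inl k \<Rightarrow> (1 - a) / real m - (if k = i then 1 - a else 0)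
    | Inr (k, j) \<Rightarrow> (1 - a) / (real m * real n) + (if k = i then a / real n else 0))"

lemma thetahat_minus_eq_weighted_noise:
  fixes th :: "nat \<Rightarrow> real^'d" and s_th s_x :: real
  assumes "m \<ge> 1" and "n \<ge> 1" and "i < m"
  defines "a \<equiv> shrink n s_th s_x"
  shows "thetahat m n s_th s_x x i - th i
     = (\<Sum>k<m. error_weight m n a i (Inl k) *\<^sub>R (th k - mu))
       + (\<Sum>k<m. \<Sum>j<n. error_weight m n a i (Inr (k, j)) *\<^sub>R (x k j - th k))"
proof -
  define W where "W k = (\<Sum>j<n. x k j - th k)" for k
  have xbar: "xbar n x k = th k + (1 / real n) *\<^sub>R W k" for k
    unfolding xbar_def W_def using \<open>n \<ge> 1\<close>
    by (simp add: sum_subtractf sum_constant_scaleR scaleR_diff_right del: sum_constant)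
  have muhat: "muhat m n x = (1 / real m) *\<^sub>R (\<Sum>k<m. th k) + (1 / (real m * real n)) *\<^sub>R (\<Sum>k<m. W k)"
    unfolding muhat_def xbar by (simp add: sum.distrib scaleR_add_right scaleR_sum_right)
  have prior: "(\<Sum>k<m. error_weight m n a i (Inl k) *\<^sub>R (th k - mu))
      = ((1 - a) / real m) *\<^sub>R (\<Sum>k<m. th k) - (1 - a) *\<^sub>R th i"
    unfolding error_weight_def using assms
    by (simp add: scaleR_left_diff_distrib sum_subtractf scaleR_sum_right[symmetric] if_distrib[of "\<lambda>c. c *\<^sub>R _"]
        sum_constant_scaleR scaleR_diff_right cong: if_cong del: sum_constant)
  have noise: "(\<Sum>k<m. \<Sum>j<n. error_weight m n a i (Inr (k, j)) *\<^sub>R (x k j - th k))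
      = ((1 - a) / (real m * real n)) *\<^sub>R (\<Sum>k<m. W k) + (a / real n) *\<^sub>R W i"
  proof -
    have "(\<Sum>k<m. \<Sum>j<n. error_weight m n a i (Inr (k, j)) *\<^sub>R (x k j - th k))
        = (\<Sum>k<m. ((1 - a) / (real m * real n) + (if k = i then a / real n else 0)) *\<^sub>R W k)"
      unfolding error_weight_def W_def by (simp add: scaleR_sum_right)
    then show ?thesis
      using assms by (simp add: scaleR_add_left sum.distrib scaleR_sum_right if_distrib[of "\<lambda>c. c *\<^sub>R _"] cong: if_cong)
  qed
  show ?thesis
    unfolding prior noise thetahat_def xbar muhat a_def[symmetric] by (simp add: algebra_simps)
qed

lemma sum_lessThan_if_eq:
  fixes A B :: "'a::comm_ring_1"
  assumes "i < m"
  shows "(\<Sum>k<m. if k = i then A else B) = A + (of_nat m - 1) * B"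
  using assms by (simp add: sum.delta_remove of_nat_diff)

lemma sum_error_weight_Inl_sq:
  assumes "i < m"
  shows "(\<Sum>k<m. (error_weight m n a i (Inl k))\<^sup>2) = (1 - a)\<^sup>2 * (1 - 1 / real m)"
proof -
  have "(\<Sum>k<m. (error_weight m n a i (Inl k))\<^sup>2)
      = (\<Sum>k<m. if k = i then ((1 - a) / real m - (1 - a))\<^sup>2 else ((1 - a) / real m)\<^sup>2)"
    unfolding error_weight_def by (intro sum.cong) auto
  also have "\<dots> = (1 - a)\<^sup>2 * (1 - 1 / real m)"
    using assms by (simp add: sum_lessThan_if_eq field_simps power2_eq_square)
  finally show ?thesis .
qed

lemma sum_error_weight_Inr_sq:
  assumes "i < m" and "n \<ge> 1"
  shows "(\<Sum>k<m. \<Sum>j<n. (error_weight m n a i (Inr (k, j)))\<^sup>2)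
       = (((1 - a) / real m + a)\<^sup>2 + (real m - 1) * ((1 - a) / real m)\<^sup>2) / real n"
proof -
  have "(\<Sum>k<m. \<Sum>j<n. (error_weight m n a i (Inr (k, j)))\<^sup>2)
      = (\<Sum>k<m. if k = i then real n * ((1 - a) / (real m * real n) + a / real n)\<^sup>2
                 else real n * ((1 - a) / (real m * real n))\<^sup>2)"
    unfolding error_weight_def by (intro sum.cong) auto
  also have "\<dots> = (((1 - a) / real m + a)\<^sup>2 + (real m - 1) * ((1 - a) / real m)\<^sup>2) / real n"
    using assms by (simp add: sum_lessThan_if_eq field_simps power2_eq_square)
  finally show ?thesis .
qed

lemma sum_error_weight_sq:
  assumes "m \<ge> 1" and "n \<ge> 1" and "s_th \<ge> 0" and "s_x > 0" and "i < m"
  defines "a \<equiv> shrink n s_th s_x"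
  shows "(\<Sum>k\<in>Inl ` {..<m} \<union> Inr ` ({..<m} \<times> {..<n}).
            (error_weight m n a i k)\<^sup>2 * (case k of Inl _ \<Rightarrow> s_th | Inr _ \<Rightarrow> s_x)\<^sup>2)
       = s_x\<^sup>2 / real n * ((1 - a) / real m + a)"
proof -
  have "s_th\<^sup>2 + s_x\<^sup>2 / real n > 0"
    using \<open>s_x > 0\<close> \<open>n \<ge> 1\<close> by (intro add_nonneg_pos) simp_all
  then have "s_th\<^sup>2 * (1 - a) = a * (s_x\<^sup>2 / real n)"
    unfolding a_def shrink_def by (simp add: field_simps)
  then have prior_var: "s_th\<^sup>2 * ((1 - a)\<^sup>2 * (1 - 1 / real m)) = s_x\<^sup>2 / real n * (a * (1 - a) * (1 - 1 / real m))"
    by (simp add: power2_eq_square mult.assoc[symmetric])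
  have "(\<Sum>k\<in>Inl ` {..<m} \<union> Inr ` ({..<m} \<times> {..<n}).
            (error_weight m n a i k)\<^sup>2 * (case k of Inl _ \<Rightarrow> s_th | Inr _ \<Rightarrow> s_x)\<^sup>2)
      = s_th\<^sup>2 * (\<Sum>k<m. (error_weight m n a i (Inl k))\<^sup>2)
        + s_x\<^sup>2 * (\<Sum>k<m. \<Sum>j<n. (error_weight m n a i (Inr (k, j)))\<^sup>2)"
    unfolding Plus_def[symmetric]
    by (simp add: sum.Plus sum.cartesian_product sum_distrib_left mult.commute)
  also have "\<dots> = s_x\<^sup>2 / real n
      * (a * (1 - a) * (1 - 1 / real m) + ((1 - a) / real m + a)\<^sup>2 + (real m - 1) * ((1 - a) / real m)\<^sup>2)"
    unfolding sum_error_weight_Inl_sq[OF \<open>i < m\<close>] sum_error_weight_Inr_sq[OF \<open>i < m\<close> \<open>n \<ge> 1\<close>] prior_var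
    using \<open>n \<ge> 1\<close> by (simp add: field_simps)
  also have "a * (1 - a) * (1 - 1 / real m) + ((1 - a) / real m + a)\<^sup>2 + (real m - 1) * ((1 - a) / real m)\<^sup>2
      = (1 - a) / real m + a"
    using \<open>m \<ge> 1\<close> by (simp add: field_simps power2_eq_square)
  finally show ?thesis .
qed

lemma (in prob_space)
  fixes Th :: "nat \<Rightarrow> 'a \<Rightarrow> real^'d" and X :: "nat \<Rightarrow> nat \<Rightarrow> 'a \<Rightarrow> real^'d"
  assumes "m \<ge> 1" and "n \<ge> 1" and "s_th \<ge> 0" and "s_x > 0" and "i < m"
    and indep: "indep_vars (\<lambda>_. borel)
      (\<lambda>k \<omega>. case k of Inl i \<Rightarrow> Th i \<omega> | Inr (i, j) \<Rightarrow> X i j \<omega> - Th i \<omega>)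
      (Inl ` {..<m} \<union> Inr ` ({..<m} \<times> {..<n}))"
    and law_Th: "\<And>i. i < m \<Longrightarrow> distr M borel (Th i) = gaussian_vec mu s_th"
    and law_noise: "\<And>i j. i < m \<Longrightarrow> j < n \<Longrightarrow> distr M borel (\<lambda>\<omega>. X i j \<omega> - Th i \<omega>) = gaussian_vec 0 s_x"
  shows integrable_thetahat_sq_error:
      "integrable M (\<lambda>\<omega>. (norm (thetahat m n s_th s_x (\<lambda>i' j. X i' j \<omega>) i - Th i \<omega>))\<^sup>2)"
    and thetahat_mse:
      "(\<integral>\<omega>. (norm (thetahat m n s_th s_x (\<lambda>i' j. X i' j \<omega>) i - Th i \<omega>))\<^sup>2 \<partial>M)
         = real CARD('d) * s_x\<^sup>2 / real n * ((1 - shrink n s_th s_x) / real m + shrink n s_th s_x)"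
proof -
  define J :: "(nat + nat \<times> nat) set" where "J = Inl ` {..<m} \<union> Inr ` ({..<m} \<times> {..<n})"
  define V where "V = (\<lambda>k \<omega>. case k of Inl i \<Rightarrow> Th i \<omega> | Inr (i, j) \<Rightarrow> X i j \<omega> - Th i \<omega>)"
  define c :: "nat + nat \<times> nat \<Rightarrow> real^'d" where "c k = (case k of Inl _ \<Rightarrow> mu | Inr _ \<Rightarrow> 0)" for k
  define s :: "nat + nat \<times> nat \<Rightarrow> real" where "s k = (case k of Inl _ \<Rightarrow> s_th | Inr _ \<Rightarrow> s_x)" for k
  define w where "w = error_weight m n (shrink n s_th s_x) i"
  have law: "distr M borel (V k) = gaussian_vec (c k) (s k)" and sd: "s k \<ge> 0" if "k \<in> J" for k
    using that law_Th law_noise \<open>s_th \<ge> 0\<close> \<open>s_x > 0\<close> by (auto simp: J_def V_def c_def s_def)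
  have error: "thetahat m n s_th s_x (\<lambda>i' j. X i' j \<omega>) i - Th i \<omega> = (\<Sum>k\<in>J. w k *\<^sub>R (V k \<omega> - c k))" for \<omega>
    unfolding thetahat_minus_eq_weighted_noise[OF \<open>m \<ge> 1\<close> \<open>n \<ge> 1\<close> \<open>i < m\<close>,
        where x = "\<lambda>i' j. X i' j \<omega>" and th = "\<lambda>k. Th k \<omega>" and mu = mu] J_def Plus_def[symmetric]
    by (simp add: sum.Plus sum.cartesian_product w_def V_def c_def case_prod_unfold)
  have "finite J"
    unfolding J_def by simp
  note indep_gaussian = \<open>finite J\<close> indep[folded V_def J_def] law sd
  show "integrable M (\<lambda>\<omega>. (norm (thetahat m n s_th s_x (\<lambda>i' j. X i' j \<omega>) i - Th i \<omega>))\<^sup>2)"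
    unfolding error by (rule integrable_norm_sq_sum_indep_gaussian[OF indep_gaussian])
  have "(\<integral>\<omega>. (norm (thetahat m n s_th s_x (\<lambda>i' j. X i' j \<omega>) i - Th i \<omega>))\<^sup>2 \<partial>M)
      = real CARD('d) * (\<Sum>k\<in>J. (w k)\<^sup>2 * (s k)\<^sup>2)"
    unfolding error by (rule integral_norm_sq_sum_indep_gaussian[OF indep_gaussian])
  also have "(\<Sum>k\<in>J. (w k)\<^sup>2 * (s k)\<^sup>2) = s_x\<^sup>2 / real n * ((1 - shrink n s_th s_x) / real m + shrink n s_th s_x)"
    unfolding w_def s_def J_def by (rule sum_error_weight_sq[OF assms(1-5)])
  finally show "(\<integral>\<omega>. (norm (thetahat m n s_th s_x (\<lambda>i' j. X i' j \<omega>) i - Th i \<omega>))\<^sup>2 \<partial>M)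
      = real CARD('d) * s_x\<^sup>2 / real n * ((1 - shrink n s_th s_x) / real m + shrink n s_th s_x)"
    by simp
qed

theorem theorem1:
  fixes m n :: nat and s_th s_x :: real
    and M :: "'w measure" and mu :: "real^'d"
    and Th :: "nat \<Rightarrow> 'w \<Rightarrow> real^'d" and X :: "nat \<Rightarrow> nat \<Rightarrow> 'w \<Rightarrow> real^'d"
  assumes "m \<ge> 1" and "n \<ge> 1" and "s_th \<ge> 0" and "s_x > 0"
  shows
    "(s_th > 0 \<longrightarrow>
       (\<forall>(x :: nat \<Rightarrow> nat \<Rightarrow> real^'d) (th :: nat \<Rightarrow> real^'d) (nu :: real^'d).
          (\<forall>th' nu'. likelihood m n s_th s_x x th' nu' \<le> likelihood m n s_th s_x x th nu)
          \<longleftrightarrow> (nu = muhat m n x \<and> (\<forall>i<m. th i = thetahat m n s_th s_x x i))))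
     \<and>
     ((prob_space M
       \<and> (\<forall>i<m. Th i \<in> borel_measurable M)
       \<and> (\<forall>i<m. \<forall>j<n. X i j \<in> borel_measurable M)
       \<and> prob_space.indep_vars M (\<lambda>_. borel)
           (\<lambda>k \<omega>. case k of Inl i \<Rightarrow> Th i \<omega> | Inr (i, j) \<Rightarrow> X i j \<omega> - Th i \<omega>)
           (Inl ` {..<m} \<union> Inr ` ({..<m} \<times> {..<n}))
       \<and> (\<forall>i<m. distr M borel (Th i) = gaussian_vec mu s_th)
       \<and> (\<forall>i<m. \<forall>j<n. distr M borel (\<lambda>\<omega>. X i j \<omega> - Th i \<omega>) = gaussian_vec 0 s_x))
      \<longrightarrow> (\<forall>i<m.
            integrable M (\<lambda>\<omega>. (norm (thetahat m n s_th s_x (\<lambda>i' j. X i' j \<omega>) i - Th i \<omega>))\<^sup>2)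
          \<and> (\<integral>\<omega>. (norm (thetahat m n s_th s_x (\<lambda>i' j. X i' j \<omega>) i - Th i \<omega>))\<^sup>2 \<partial>M)
              \<le> real CARD('d) * s_x\<^sup>2 / real n
                 * ((1 - shrink n s_th s_x) / real m + shrink n s_th s_x)))"
  apply (intro conjI impI allI)
  subgoal
    by (rule likelihood_maximal_iff[OF assms(1,2) _ assms(4)])
  subgoal
    by (elim conjE, rule prob_space.integrable_thetahat_sq_error[OF _ assms]) auto
  subgoal
    by (elim conjE, subst prob_space.thetahat_mse[OF _ assms]) auto
  done

end
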